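(* Let $G$ be a second countable étale groupoid whose unit space $G^{(0)}$ is compact and totally disconnected. If $G$ is almost finite, then $M(G)$ is nonempty.
   Context: An étale groupoid is a locally compact Hausdorff groupoid whose range map $r$ is a local homeomorphism; $s$ is the source map. A $G$-set is $U\subset G$ with $r|_U,s|_U$ injective. $M(G)$ is the set of probability measures $\mu$ on $G^{(0)}$ with $\mu(r(U))=\mu(s(U))$ for every open $G$-set $U$. Elementary subgroupoid: compact open principal subgroupoid $K$ with $K^{(0)}=G^{(0)}$ (principal: $r(k)=s(k)$ implies $k$ is a unit). $G$ is almost finite if for every compact $C\subset G$ and $\varepsilon>0$ there is an elementary subgroupoid $K$ with $|CKx\setminus Kx|/|K(x)|<\varepsilon$ for all $x\in G^{(0)}$, where $Kx=\{k\in K:s(k)=x\}$, $CKx=\{ck:c\in C,k\in Kx,s(c)=r(k)\}$, $K(x)=r(Kx)$. *)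

theory Defs
  imports "HOL-Analysis.Analysis" "HOL-Probability.Probability"
begin

text \<open>A groupoid is given by its set of arrows (the carrier of the topology T),
the unit space G0, range r, source s, partial multiplication m (defined on
composable pairs (x,y) with s x = r y) and inversion i.\<close>

definition composable :: "'g topology \<Rightarrow> ('g \<Rightarrow> 'g) \<Rightarrow> ('g \<Rightarrow> 'g) \<Rightarrow> ('g \<times> 'g) set" where
  "composable T r s = {(x, y). x \<in> topspace T \<and> y \<in> topspace T \<and> s x = r y}"

definition groupoid ::
  "'g set \<Rightarrow> 'g set \<Rightarrow> ('g \<Rightarrow> 'g) \<Rightarrow> ('g \<Rightarrow> 'g) \<Rightarrow> ('g \<Rightarrow> 'g \<Rightarrow> 'g) \<Rightarrow> ('g \<Rightarrow> 'g) \<Rightarrow> bool" where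
  "groupoid G G0 r s m i \<longleftrightarrow>
     G0 \<subseteq> G \<and>
     (\<forall>x\<in>G. r x \<in> G0 \<and> s x \<in> G0) \<and>
     (\<forall>u\<in>G0. r u = u \<and> s u = u) \<and>
     (\<forall>x\<in>G. \<forall>y\<in>G. s x = r y \<longrightarrow> m x y \<in> G \<and> r (m x y) = r x \<and> s (m x y) = s y) \<and>
     (\<forall>x\<in>G. \<forall>y\<in>G. \<forall>z\<in>G. s x = r y \<and> s y = r z \<longrightarrow> m (m x y) z = m x (m y z)) \<and>
     (\<forall>x\<in>G. m (r x) x = x \<and> m x (s x) = x) \<and>
     (\<forall>x\<in>G. i x \<in> G \<and> r (i x) = s x \<and> s (i x) = r x \<and> m x (i x) = r x \<and> m (i x) x = s x)"

definition etale_groupoid ::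
  "'g topology \<Rightarrow> 'g set \<Rightarrow> ('g \<Rightarrow> 'g) \<Rightarrow> ('g \<Rightarrow> 'g) \<Rightarrow> ('g \<Rightarrow> 'g \<Rightarrow> 'g) \<Rightarrow> ('g \<Rightarrow> 'g) \<Rightarrow> bool" where
  "etale_groupoid T G0 r s m i \<longleftrightarrow>
     groupoid (topspace T) G0 r s m i \<and>
     Hausdorff_space T \<and> locally_compact_space T \<and>
     continuous_map (subtopology (prod_topology T T) (composable T r s)) T (\<lambda>(x, y). m x y) \<and>
     continuous_map T T i \<and>
     (\<forall>x\<in>topspace T. \<exists>U. openin T U \<and> x \<in> U \<and>
        openin (subtopology T G0) (r ` U) \<and>
        homeomorphic_map (subtopology T U) (subtopology T (r ` U)) r)"

definition Gset :: "('g \<Rightarrow> 'g) \<Rightarrow> ('g \<Rightarrow> 'g) \<Rightarrow> 'g set \<Rightarrow> bool" where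
  "Gset r s U \<longleftrightarrow> inj_on r U \<and> inj_on s U"

definition totally_disconnected_space :: "'a topology \<Rightarrow> bool" where
  "totally_disconnected_space X \<longleftrightarrow>
     (\<forall>x\<in>topspace X. connected_component_of_set X x = {x})"

definition invariant_measures ::
  "'g topology \<Rightarrow> 'g set \<Rightarrow> ('g \<Rightarrow> 'g) \<Rightarrow> ('g \<Rightarrow> 'g) \<Rightarrow> 'g measure set" where
  "invariant_measures T G0 r s =
     {\<mu>. space \<mu> = G0 \<and> sets \<mu> = sigma_sets G0 {U. openin (subtopology T G0) U} \<and>
          prob_space \<mu> \<and>
          (\<forall>U. openin T U \<and> Gset r s U \<longrightarrow> emeasure \<mu> (r ` U) = emeasure \<mu> (s ` U))}"

definition elementary_subgroupoid ::
  "'g topology \<Rightarrow> 'g set \<Rightarrow> ('g \<Rightarrow> 'g) \<Rightarrow> ('g \<Rightarrow> 'g) \<Rightarrow> ('g \<Rightarrow> 'g \<Rightarrow> 'g) \<Rightarrow> ('g \<Rightarrow> 'g) \<Rightarrow> 'g set \<Rightarrow> bool" where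
  "elementary_subgroupoid T G0 r s m i K \<longleftrightarrow>
     compactin T K \<and> openin T K \<and>
     G0 \<subseteq> K \<and>
     (\<forall>x\<in>K. \<forall>y\<in>K. s x = r y \<longrightarrow> m x y \<in> K) \<and>
     (\<forall>x\<in>K. i x \<in> K) \<and>
     (\<forall>k\<in>K. r k = s k \<longrightarrow> k \<in> G0)"

definition almost_finite ::
  "'g topology \<Rightarrow> 'g set \<Rightarrow> ('g \<Rightarrow> 'g) \<Rightarrow> ('g \<Rightarrow> 'g) \<Rightarrow> ('g \<Rightarrow> 'g \<Rightarrow> 'g) \<Rightarrow> ('g \<Rightarrow> 'g) \<Rightarrow> bool" where
  "almost_finite T G0 r s m i \<longleftrightarrow>
     (\<forall>C (\<epsilon>::real). compactin T C \<and> \<epsilon> > 0 \<longrightarrow>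
        (\<exists>K. elementary_subgroupoid T G0 r s m i K \<and>
           (\<forall>x\<in>G0.
              let Kx = {k \<in> K. s k = x};
                  CKx = {m c k | c k. c \<in> C \<and> k \<in> Kx \<and> s c = r k}
              in real (card (CKx - Kx)) / real (card (r ` Kx)) < \<epsilon>)))"

end

theory Submission
  imports Defs
begin

text \<open>Almost finiteness yields, for every compact set \<open>C\<close> of arrows, finite sets of units
\<open>F = r(Kx)\<close> (the ranges of a source fibre of an elementary subgroupoid \<open>K\<close>) that are almost
invariant: for a compact open bisection \<open>V \<subseteq> C\<close>, composing the arrows of \<open>V\<close> with those of
\<open>Kx\<close> shows that \<open>|F \<inter> r(V)|\<close> and \<open>|F \<inter> s(V)|\<close> differ by at most \<open>|CKx - Kx| < \<epsilon> |F|\<close>.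
The normalised counting measures on these sets converge along a subsequence on each of the
countably many clopen sets of units; the limit is an invariant, finitely additive probability
content on the clopen algebra. Compactness of the unit space makes it countably additive, so it
extends to a Borel probability measure, and invariance passes from compact open bisections to
all open bisections by cutting these into countably many disjoint compact open ones.\<close>

section \<open>Clopen sets, contents and counting densities\<close>

definition clopens :: "'a topology \<Rightarrow> 'a set set" where
  "clopens X = {A. closedin X A \<and> openin X A}"

lemma clopens_Un: "A \<in> clopens X \<Longrightarrow> B \<in> clopens X \<Longrightarrow> A \<union> B \<in> clopens X"
  by (simp add: clopens_def closedin_Un openin_Un)

lemma clopens_ring_of_sets: "ring_of_sets (topspace X) (clopens X)"
  by (rule ring_of_setsI) (auto simp: clopens_def dest: closedin_subset)

lemma countable_compact_openin:
  assumes "second_countable X"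
  shows "countable {V. openin X V \<and> compactin X V}"
proof -
  obtain \<B> where \<B>: "countable \<B>" "\<forall>V\<in>\<B>. openin X V"
      "\<forall>U x. openin X U \<and> x \<in> U \<longrightarrow> (\<exists>V\<in>\<B>. x \<in> V \<and> V \<subseteq> U)"
    using assms unfolding second_countable_def by blast
  have "{V. openin X V \<and> compactin X V} \<subseteq> Union ` {\<F>. finite \<F> \<and> \<F> \<subseteq> \<B>}"
  proof
    fix V assume "V \<in> {V. openin X V \<and> compactin X V}"
    then have V: "openin X V" "compactin X V" by auto
    let ?\<U> = "{B \<in> \<B>. B \<subseteq> V}"
    have "V \<subseteq> \<Union>?\<U>" "\<forall>B\<in>?\<U>. openin X B" using \<B>(2,3) V(1) by blast+
    then obtain \<F> where "finite \<F>" "\<F> \<subseteq> ?\<U>" "V \<subseteq> \<Union>\<F>"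
      using V(2) unfolding compactin_def by (elim conjE allE[of _ ?\<U>]) blast
    then show "V \<in> Union ` {\<F>. finite \<F> \<and> \<F> \<subseteq> \<B>}" by blast
  qed
  then show ?thesis
    by (rule countable_subset[OF _ countable_image[OF countable_Collect_finite_subset[OF \<B>(1)]]])
qed

lemma countable_clopens:
  assumes "second_countable X" "compact_space X"
  shows "countable (clopens X)"
proof -
  have "clopens X \<subseteq> {V. openin X V \<and> compactin X V}"
    using assms(2) closedin_compact_space by (auto simp: clopens_def)
  then show ?thesis by (rule countable_subset[OF _ countable_compact_openin[OF assms(1)]])
qed

lemma clopen_neighbourhood_base:
  assumes "compact_space X" "Hausdorff_space X" "totally_disconnected_space X"
    and W: "openin X W" "x \<in> W"
  shows "\<exists>A \<in> clopens X. x \<in> A \<and> A \<subseteq> W"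
proof -
  have x: "x \<in> topspace X" using W openin_subset by blast
  \<comment> \<open>In a compact Hausdorff space quasi-components are components, hence singletons here.\<close>
  have "quasi_component_of_set X x = {x}"
    using assms(1-3) x quasi_eq_connected_component_of
    unfolding totally_disconnected_space_def by metis
  then have qc: "{x} \<in> quasi_components_of X"
    unfolding quasi_components_of_def using x by blast
  have "compactin X (topspace X - W)"
    using W assms(1) closedin_compact_space by blast
  moreover have "{x} \<inter> (topspace X - W) = {}" using W(2) by blast
  ultimately have "separated_between X {x} (topspace X - W)"
    using separated_between_quasi_component_compact[OF qc] by simp
  then obtain U V where UV: "openin X U" "openin X V" "U \<union> V = topspace X" "disjnt U V"
      "{x} \<subseteq> U" "topspace X - W \<subseteq> V"
    unfolding separated_between_def by blast
  have "U = topspace X - V" using UV(3,4) by (auto simp: disjnt_def)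
  then have "U \<in> clopens X" using UV(1,2) by (auto simp: clopens_def)
  moreover have "U \<subseteq> W" using UV(3,4,6) openin_subset[OF UV(1)] by (auto simp: disjnt_def)
  ultimately show ?thesis using UV(5) by blast
qed

lemma sigma_sets_countable_base:
  assumes "countable \<B>" "\<And>B. B \<in> \<B> \<Longrightarrow> openin X B"
    and base: "\<And>U. openin X U \<Longrightarrow> U = \<Union>{B \<in> \<B>. B \<subseteq> U}"
  shows "sigma_sets (topspace X) \<B> = sigma_sets (topspace X) {U. openin X U}"
proof (rule sigma_sets_eqI)
  fix U assume "U \<in> {U. openin X U}"
  then have "\<Union>{B \<in> \<B>. B \<subseteq> U} \<in> sigma_sets (topspace X) \<B>"
    using assms(1) by (auto intro: sigma_sets_UNION sigma_sets.Basic)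
  then show "U \<in> sigma_sets (topspace X) \<B>" using base \<open>U \<in> _\<close> by auto
qed (use assms(2) in \<open>auto intro: sigma_sets.Basic\<close>)

lemma clopen_content_extends_to_measure:
  fixes L :: "'a set \<Rightarrow> real"
  assumes "compact_space X"
    and nonneg: "\<And>A. A \<in> clopens X \<Longrightarrow> L A \<ge> 0"
    and add: "\<And>A B. A \<in> clopens X \<Longrightarrow> B \<in> clopens X \<Longrightarrow> A \<inter> B = {} \<Longrightarrow> L (A \<union> B) = L A + L B"
  shows "\<exists>\<mu>. space \<mu> = topspace X \<and> sets \<mu> = sigma_sets (topspace X) (clopens X) \<and>
             (\<forall>A \<in> clopens X. emeasure \<mu> A = ennreal (L A))"
proof -
  interpret ring_of_sets "topspace X" "clopens X" by (rule clopens_ring_of_sets)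
  let ?f = "\<lambda>A. ennreal (L A)"
  have L_empty: "L {} = 0" using add[of "{}" "{}"] by (simp add: clopens_def)
  have pos: "positive (clopens X) ?f" by (simp add: positive_def L_empty)
  have add': "additive (clopens X) ?f"
    using add nonneg by (simp add: additive_def ennreal_plus)
  have cont: "(\<lambda>n. ?f (A n)) \<longlonglongrightarrow> 0"
    if A: "range A \<subseteq> clopens X" "decseq A" "(\<Inter>n. A n) = {}" for A
  proof -
    have clo: "closedin X (A n)" for n using A(1) by (auto simp: clopens_def)
    \<comment> \<open>By compactness a decreasing sequence of clopens with empty intersection is eventually empty.\<close>
    obtain N where N: "A N = {}"
    proof (rule ccontr)
      assume "\<not> thesis"
      with that have "A n \<noteq> {}" for n by blast
      then show False using compact_space_imp_nest[OF assms(1) clo _ A(2)] A(3) by blast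
    qed
    have "?f (A n) = 0" if "N \<le> n" for n
      using decseqD[OF A(2) that] N by (simp add: L_empty)
    then have "\<forall>\<^sub>F n in sequentially. ?f (A n) = 0"
      by (rule eventually_sequentiallyI)
    then show ?thesis by (rule tendsto_eventually)
  qed
  have fin: "?f A \<noteq> \<infinity>" for A by simp
  obtain \<mu>0 where \<mu>0: "\<forall>A \<in> clopens X. \<mu>0 A = ?f A"
      "measure_space (topspace X) (sigma_sets (topspace X) (clopens X)) \<mu>0"
    using caratheodory_empty_continuous[OF pos add' fin cont] by blast
  let ?\<mu> = "measure_of (topspace X) (sigma_sets (topspace X) (clopens X)) \<mu>0"
  have sa: "sigma_algebra (topspace X) (sigma_sets (topspace X) (clopens X))"
    by (rule sigma_algebra_sigma_sets) (auto simp: clopens_def dest: closedin_subset)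
  have "emeasure ?\<mu> A = ?f A" if "A \<in> clopens X" for A
    using \<mu>0 emeasure_measure_of_sigma[OF sa, of \<mu>0 A] that
    by (auto simp: measure_space_def intro: sigma_sets.Basic)
  then show ?thesis
    using sigma_algebra.sets_measure_of_eq[OF sa] sigma_algebra.space_measure_of_eq[OF sa]
    by (intro exI[of _ ?\<mu>]) simp
qed

lemma subseq_converging_on_countable:
  fixes f :: "nat \<Rightarrow> 'i \<Rightarrow> real"
  assumes "countable I" "\<And>n a. f n a \<in> S" "compact S"
  shows "\<exists>\<sigma> l. strict_mono \<sigma> \<and> (\<forall>a\<in>I. (\<lambda>n. f (\<sigma> n) a) \<longlonglongrightarrow> l a)"
proof -
  let ?e = "from_nat_into I" and ?S = "PiE (UNIV::nat set) (\<lambda>_. S)"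
  have "compact ?S"
    using compactin_PiE[of "\<lambda>_. euclidean" UNIV "\<lambda>_. S"] assms(3)
    by (simp add: euclidean_product_topology)
  moreover have "(\<lambda>j. f n (?e j)) \<in> ?S" for n using assms(2) by auto
  ultimately obtain l \<sigma> where l: "strict_mono \<sigma>" "((\<lambda>n j. f n (?e j)) \<circ> \<sigma>) \<longlonglongrightarrow> l"
    by (metis compact_imp_seq_compact seq_compactE)
  have lim: "(\<lambda>n. f (\<sigma> n) (?e j)) \<longlonglongrightarrow> l j" for j
    using continuous_on_tendsto_compose[OF continuous_on_product_coordinates[of j] l(2)]
    by (simp add: o_def)
  have "(\<lambda>n. f (\<sigma> n) a) \<longlonglongrightarrow> l (to_nat_on I a)" if "a \<in> I" for a
    using lim[of "to_nat_on I a"] by (simp add: from_nat_into_to_nat_on[OF assms(1) that])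
  with l(1) have "strict_mono \<sigma> \<and> (\<forall>a\<in>I. (\<lambda>n. f (\<sigma> n) a) \<longlonglongrightarrow> (l \<circ> to_nat_on I) a)"
    by simp
  then show ?thesis by blast
qed

definition counting_density :: "'a set \<Rightarrow> 'a set \<Rightarrow> real" where
  "counting_density F A = real (card (F \<inter> A)) / real (card F)"

lemma counting_density_bounds: "finite F \<Longrightarrow> counting_density F A \<in> {0..1}"
  by (cases "F = {}") (auto simp: counting_density_def card_mono divide_le_eq_1)

lemma counting_density_superset: "finite F \<Longrightarrow> F \<noteq> {} \<Longrightarrow> F \<subseteq> A \<Longrightarrow> counting_density F A = 1"
  by (simp add: counting_density_def Int_absorb2)

lemma counting_density_Un:
  "finite F \<Longrightarrow> A \<inter> B = {} \<Longrightarrow>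
     counting_density F (A \<union> B) = counting_density F A + counting_density F B"
  by (simp add: counting_density_def Int_Un_distrib card_Un_disjoint disjoint_iff add_divide_distrib)

lemma counting_density_diff_less:
  assumes "finite F" "F \<noteq> {}"
    and "\<bar>real (card (F \<inter> A)) - real (card (F \<inter> B))\<bar> < \<epsilon> * real (card F)"
  shows "\<bar>counting_density F A - counting_density F B\<bar> < \<epsilon>"
proof -
  have c: "real (card F) > 0" using assms(1,2) by (simp add: card_gt_0_iff)
  then have "\<bar>counting_density F A - counting_density F B\<bar>
      = \<bar>real (card (F \<inter> A)) - real (card (F \<inter> B))\<bar> / real (card F)"
    by (simp add: counting_density_def diff_divide_distrib[symmetric] abs_divide)
  also have "\<dots> < \<epsilon>" using assms(3) c by (simp add: divide_less_eq)
  finally show ?thesis .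
qed

lemma limit_counting_density:
  assumes fin: "\<And>n. finite (F n)"
    and lim: "\<And>A. A \<in> \<A> \<Longrightarrow> (\<lambda>n. counting_density (F n) A) \<longlonglongrightarrow> L A"
  shows limit_counting_density_nonneg: "A \<in> \<A> \<Longrightarrow> L A \<ge> 0"
    and limit_counting_density_Un:
      "A \<in> \<A> \<Longrightarrow> B \<in> \<A> \<Longrightarrow> A \<union> B \<in> \<A> \<Longrightarrow> A \<inter> B = {} \<Longrightarrow> L (A \<union> B) = L A + L B"
    and limit_counting_density_total:
      "\<Omega> \<in> \<A> \<Longrightarrow> (\<And>n. F n \<noteq> {}) \<Longrightarrow> (\<And>n. F n \<subseteq> \<Omega>) \<Longrightarrow> L \<Omega> = 1"
proof -
  show "L A \<ge> 0" if "A \<in> \<A>"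
  proof (rule tendsto_lowerbound[OF lim[OF that]])
    show "\<forall>\<^sub>F n in sequentially. 0 \<le> counting_density (F n) A"
      using counting_density_bounds[OF fin] by simp
  qed simp
  show "L (A \<union> B) = L A + L B" if "A \<in> \<A>" "B \<in> \<A>" "A \<union> B \<in> \<A>" "A \<inter> B = {}"
  proof (rule LIMSEQ_unique[OF lim[OF that(3)]])
    show "(\<lambda>n. counting_density (F n) (A \<union> B)) \<longlonglongrightarrow> L A + L B"
      using tendsto_add[OF lim[OF that(1)] lim[OF that(2)]] by (simp add: counting_density_Un fin that(4))
  qed
  show "L \<Omega> = 1" if "\<Omega> \<in> \<A>" "\<And>n. F n \<noteq> {}" "\<And>n. F n \<subseteq> \<Omega>"
  proof (rule LIMSEQ_unique[OF lim[OF that(1)]])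
    show "(\<lambda>n. counting_density (F n) \<Omega>) \<longlonglongrightarrow> 1"
      by (simp add: counting_density_superset fin that(2,3))
  qed
qed

section \<open>Etale groupoids\<close>

locale etale =
  fixes T :: "'g topology" and G0 :: "'g set"
    and r s :: "'g \<Rightarrow> 'g" and m :: "'g \<Rightarrow> 'g \<Rightarrow> 'g" and i :: "'g \<Rightarrow> 'g"
  assumes etale_groupoid: "etale_groupoid T G0 r s m i"
begin

abbreviation "G \<equiv> topspace T"
abbreviation "T0 \<equiv> subtopology T G0"

lemma groupoid: "groupoid G G0 r s m i"
  using etale_groupoid by (simp add: etale_groupoid_def)

lemma Hausdorff: "Hausdorff_space T"
  using etale_groupoid by (simp add: etale_groupoid_def)

lemma units_subset: "G0 \<subseteq> G"
  using groupoid by (simp add: groupoid_def)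

lemma topspace_units [simp]: "topspace T0 = G0"
  and Int_units [simp]: "G \<inter> G0 = G0"
  using units_subset by auto

lemma range_in_units: "x \<in> G \<Longrightarrow> r x \<in> G0"
  and range_unit: "u \<in> G0 \<Longrightarrow> r u = u"
  and source_unit: "u \<in> G0 \<Longrightarrow> s u = u"
  and range_mult: "x \<in> G \<Longrightarrow> y \<in> G \<Longrightarrow> s x = r y \<Longrightarrow> r (m x y) = r x"
  and inverse_closed: "x \<in> G \<Longrightarrow> i x \<in> G"
  and range_inverse: "x \<in> G \<Longrightarrow> r (i x) = s x"
  and source_inverse: "x \<in> G \<Longrightarrow> s (i x) = r x"
  using groupoid by (simp_all add: groupoid_def)

lemma mult_assoc:
  "\<lbrakk>x \<in> G; y \<in> G; z \<in> G; s x = r y; s y = r z\<rbrakk> \<Longrightarrow> m (m x y) z = m x (m y z)"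
  and unit_left: "x \<in> G \<Longrightarrow> m (r x) x = x"
  and unit_right: "x \<in> G \<Longrightarrow> m x (s x) = x"
  and mult_inverse_left: "x \<in> G \<Longrightarrow> m (i x) x = s x"
  using groupoid by (simp_all add: groupoid_def)

lemma inverse_inverse:
  assumes x: "x \<in> G" shows "i (i x) = x"
proof -
  have y: "i x \<in> G" and z: "i (i x) \<in> G" using x by (simp_all add: inverse_closed)
  have "i (i x) = m (i (i x)) (s (i (i x)))" using z by (rule unit_right[symmetric])
  also have "\<dots> = m (i (i x)) (m (i x) x)"
    using x y by (simp add: source_inverse range_inverse mult_inverse_left)
  also have "\<dots> = m (m (i (i x)) (i x)) x"
    using x y z by (simp add: mult_assoc source_inverse range_inverse)
  also have "\<dots> = x"
    using x y by (simp add: mult_inverse_left source_inverse unit_left)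
  finally show ?thesis .
qed

lemma homeomorphic_map_inverse: "homeomorphic_map T T i"
proof -
  have "continuous_map T T i" using etale_groupoid by (simp add: etale_groupoid_def)
  then show ?thesis
    unfolding homeomorphic_map_maps homeomorphic_maps_def using inverse_inverse by blast
qed

lemma openin_inverse_image: "openin T V \<Longrightarrow> openin T (i ` V)"
  using homeomorphic_imp_open_map[OF homeomorphic_map_inverse] by (simp add: open_map_def)

lemma compactin_inverse_image: "compactin T V \<Longrightarrow> compactin T (i ` V)"
  using homeomorphic_map_inverse homeomorphic_imp_continuous_map image_compactin by blast

lemma range_image_inverse: "V \<subseteq> G \<Longrightarrow> r ` i ` V = s ` V"
  by (force simp: image_image range_inverse subset_iff)

lemma source_image_inverse: "V \<subseteq> G \<Longrightarrow> s ` i ` V = r ` V"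
  by (force simp: image_image source_inverse subset_iff)

lemma local_homeomorphism_range:
  "x \<in> G \<Longrightarrow> \<exists>U. openin T U \<and> x \<in> U \<and> openin T0 (r ` U) \<and>
     homeomorphic_map (subtopology T U) (subtopology T (r ` U)) r"
  using etale_groupoid by (simp add: etale_groupoid_def)

lemma continuous_map_range: "continuous_map T T0 r"
  unfolding continuous_map_def
proof (intro conjI allI impI)
  show "r \<in> G \<rightarrow> topspace T0" using range_in_units units_subset by force
next
  fix W assume W: "openin T0 W"
  show "openin T {x \<in> G. r x \<in> W}"
  proof (subst openin_subopen, intro ballI)
    fix x assume x: "x \<in> {x \<in> G. r x \<in> W}"
    obtain U where U: "openin T U" "x \<in> U"
        "homeomorphic_map (subtopology T U) (subtopology T (r ` U)) r"
      using local_homeomorphism_range x by blast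
    obtain W' where W': "openin T W'" "W = W' \<inter> G0" using W by (auto simp: openin_subtopology)
    have "r ` U \<subseteq> G0" using U(1) openin_subset range_in_units by blast
    then have "openin (subtopology T (r ` U)) (W \<inter> r ` U)"
      using W' by (auto simp: openin_subtopology)
    then have "openin (subtopology T U) {y \<in> topspace (subtopology T U). r y \<in> W \<inter> r ` U}"
      using homeomorphic_imp_continuous_map[OF U(3)] unfolding continuous_map_def by blast
    moreover have "{y \<in> topspace (subtopology T U). r y \<in> W \<inter> r ` U} = {y \<in> U. r y \<in> W}"
      using U(1) openin_subset by auto
    ultimately have "openin T {y \<in> U. r y \<in> W}"
      using U(1) openin_trans_full by metis
    then show "\<exists>T'. openin T T' \<and> x \<in> T' \<and> T' \<subseteq> {x \<in> G. r x \<in> W}"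
      using x U(2) openin_subset[OF U(1)] by (intro exI[of _ "{y \<in> U. r y \<in> W}"]) auto
  qed
qed

lemma openin_range_image:
  assumes V: "openin T V" shows "openin T0 (r ` V)"
proof (subst openin_subopen, intro ballI)
  fix y assume "y \<in> r ` V"
  then obtain x where x: "x \<in> V" "y = r x" by blast
  have "x \<in> G" using V x(1) openin_subset by blast
  then obtain U where U: "openin T U" "x \<in> U" "openin T0 (r ` U)"
      "homeomorphic_map (subtopology T U) (subtopology T (r ` U)) r"
    using local_homeomorphism_range by blast
  have "openin (subtopology T U) (V \<inter> U)" using V by (simp add: openin_subtopology_Int)
  then have "openin (subtopology T (r ` U)) (r ` (V \<inter> U))"
    using homeomorphic_imp_open_map[OF U(4)] by (simp add: open_map_def)
  moreover have "G0 \<inter> r ` U = r ` U"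
    using U(1) openin_subset range_in_units by blast
  then have "subtopology T (r ` U) = subtopology T0 (r ` U)"
    by (simp add: subtopology_subtopology)
  ultimately have "openin T0 (r ` (V \<inter> U))" using U(3) openin_trans_full by metis
  then show "\<exists>T'. openin T0 T' \<and> y \<in> T' \<and> T' \<subseteq> r ` V"
    using x U(2) by (intro exI[of _ "r ` (V \<inter> U)"]) auto
qed

lemma locally_injective_range:
  assumes "x \<in> G" shows "\<exists>U. openin T U \<and> x \<in> U \<and> inj_on r U"
proof -
  obtain U where U: "openin T U" "x \<in> U"
      "homeomorphic_map (subtopology T U) (subtopology T (r ` U)) r"
    using local_homeomorphism_range assms by blast
  have "topspace (subtopology T U) = U" using U(1) openin_subset by auto
  then have "inj_on r U" using U(3) homeomorphic_map_def by metis
  then show ?thesis using U(1,2) by blast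
qed

lemma locally_injective_source:
  assumes x: "x \<in> G" shows "\<exists>U. openin T U \<and> x \<in> U \<and> inj_on s U"
proof -
  obtain U where U: "openin T U" "i x \<in> U" "inj_on r U"
    using locally_injective_range inverse_closed x by blast
  have UG: "U \<subseteq> G" using U(1) openin_subset by blast
  have "inj_on s (i ` U)"
  proof (rule inj_onI)
    fix a b assume "a \<in> i ` U" "b \<in> i ` U" "s a = s b"
    moreover obtain a' b' where "a' \<in> U" "b' \<in> U" "a = i a'" "b = i b'"
      using \<open>a \<in> i ` U\<close> \<open>b \<in> i ` U\<close> by blast
    ultimately have "r a' = r b'" using UG source_inverse by (metis subsetD)
    then show "a = b" using U(3) \<open>a = i a'\<close> \<open>b = i b'\<close> \<open>a' \<in> U\<close> \<open>b' \<in> U\<close>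
      by (simp add: inj_on_eq_iff)
  qed
  moreover have "x \<in> i ` U" using U(2) inverse_inverse[OF x] by (metis image_eqI)
  ultimately show ?thesis using openin_inverse_image U(1) by blast
qed

lemma finite_source_fibre:
  assumes C: "compactin T C" shows "finite {c \<in> C. s c = x}"
proof -
  let ?\<U> = "{V. openin T V \<and> inj_on s V}"
  have "C \<subseteq> \<Union>?\<U>" using C compactin_subset_topspace locally_injective_source by blast
  then obtain \<F> where \<F>: "finite \<F>" "\<F> \<subseteq> ?\<U>" "C \<subseteq> \<Union>\<F>"
    using C unfolding compactin_def by (metis (no_types, lifting) mem_Collect_eq)
  have "finite {c \<in> V. s c = x}" if "V \<in> \<F>" for V
  proof -
    have "{c \<in> V. s c = x} \<subseteq> the_inv_into V s ` {x}"
      using that \<F>(2) by (auto intro: the_inv_into_f_f[symmetric] simp: image_iff)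
    then show ?thesis using finite_subset by blast
  qed
  then have "finite (\<Union>V\<in>\<F>. {c \<in> V. s c = x})" using \<F>(1) by blast
  then show ?thesis by (rule finite_subset[rotated]) (use \<F>(3) in blast)
qed

section \<open>Almost invariant sets of units\<close>

lemma card_source_image_le:
  fixes x :: 'g
  assumes K: "compactin T K" and C: "compactin T C" and VC: "V \<subseteq> C" and inj: "inj_on r V"
  defines "Kx \<equiv> {k \<in> K. s k = x}"
  defines "CKx \<equiv> {m c k | c k. c \<in> C \<and> k \<in> Kx \<and> s c = r k}"
  shows "card (r ` Kx \<inter> s ` V) \<le> card (r ` Kx \<inter> r ` V) + card (CKx - Kx)"
proof -
  have KG: "K \<subseteq> G" and CG: "C \<subseteq> G" using K C compactin_subset_topspace by auto
  have finKx: "finite Kx" unfolding Kx_def by (rule finite_source_fibre[OF K])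
  have "CKx \<subseteq> (\<lambda>(k, c). m c k) ` (SIGMA k:Kx. {c \<in> C. s c = r k})"
    unfolding CKx_def by (auto simp: image_iff)
  moreover have "finite (SIGMA k:Kx. {c \<in> C. s c = r k})"
    by (intro finite_SigmaI finKx finite_source_fibre[OF C])
  ultimately have finCKx: "finite CKx" by (rule finite_subset[OF _ finite_imageI])
  define S where "S = r ` Kx \<inter> s ` V"
  have "\<forall>y\<in>S. \<exists>v. v \<in> V \<and> s v = y" unfolding S_def by auto
  then obtain v where v: "\<forall>y\<in>S. v y \<in> V \<and> s (v y) = y" by (rule bchoice[THEN exE])
  have "\<forall>y\<in>S. \<exists>k. k \<in> Kx \<and> r k = y" unfolding S_def by auto
  then obtain k where k: "\<forall>y\<in>S. k y \<in> Kx \<and> r (k y) = y" by (rule bchoice[THEN exE])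
  \<comment> \<open>Compose the arrow of the bisection starting at \<open>y\<close> with an arrow of \<open>Kx\<close> ending there.\<close>
  define \<phi> where "\<phi> y = m (v y) (k y)" for y
  have \<phi>: "\<phi> y \<in> CKx \<and> r (\<phi> y) = r (v y)" if "y \<in> S" for y
  proof -
    have "v y \<in> C" "k y \<in> Kx" "s (v y) = r (k y)" using v k that VC by auto
    moreover have "v y \<in> G" "k y \<in> G" using calculation CG KG by (auto simp: Kx_def)
    ultimately show ?thesis unfolding \<phi>_def CKx_def by (auto simp: range_mult)
  qed
  have inj_\<phi>: "inj_on \<phi> S" and inj_r\<phi>: "inj_on r (\<phi> ` S)"
  proof -
    have "a = b" if "a \<in> S" "b \<in> S" "r (\<phi> a) = r (\<phi> b)" for a b
    proof -
      have "r (v a) = r (v b)" using \<phi> that by simp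
      then have "v a = v b" using inj v that by (simp add: inj_on_eq_iff)
      then show "a = b" using v that by metis
    qed
    then show "inj_on \<phi> S" "inj_on r (\<phi> ` S)" by (auto simp: inj_on_def)
  qed
  have "card S = card (\<phi> ` S)" using inj_\<phi> by (rule card_image[symmetric])
  also have "\<dots> \<le> card (\<phi> ` S \<inter> Kx) + card (\<phi> ` S - Kx)"
    using card_Un_le[of "\<phi> ` S \<inter> Kx" "\<phi> ` S - Kx"] by (simp add: Int_Diff_Un)
  also have "card (\<phi> ` S \<inter> Kx) \<le> card (r ` Kx \<inter> r ` V)"
  proof -
    have "card (\<phi> ` S \<inter> Kx) = card (r ` (\<phi> ` S \<inter> Kx))"
      using inj_on_subset[OF inj_r\<phi>] by (simp add: card_image)
    also have "\<dots> \<le> card (r ` Kx \<inter> r ` V)"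
    proof (rule card_mono)
      show "finite (r ` Kx \<inter> r ` V)" using finKx by simp
      show "r ` (\<phi> ` S \<inter> Kx) \<subseteq> r ` Kx \<inter> r ` V"
        using \<phi> v by (auto simp: image_iff)
    qed
    finally show ?thesis .
  qed
  also have "card (\<phi> ` S - Kx) \<le> card (CKx - Kx)"
    using \<phi> finCKx by (intro card_mono) auto
  finally show ?thesis unfolding S_def by simp
qed

lemma almost_finite_imp_almost_invariant_set:
  assumes "almost_finite T G0 r s m i" and x: "x \<in> G0" and C: "compactin T C" and "\<epsilon> > 0"
  shows "\<exists>F. finite F \<and> x \<in> F \<and> F \<subseteq> G0 \<and>
    (\<forall>V. V \<subseteq> C \<longrightarrow> i ` V \<subseteq> C \<longrightarrow> Gset r s V \<longrightarrow>
       \<bar>real (card (F \<inter> r ` V)) - real (card (F \<inter> s ` V))\<bar> < \<epsilon> * real (card F))"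
proof -
  obtain K where K: "elementary_subgroupoid T G0 r s m i K"
    and ratio: "\<And>x. x \<in> G0 \<Longrightarrow>
       real (card ({m c k | c k. c \<in> C \<and> k \<in> {k \<in> K. s k = x} \<and> s c = r k} - {k \<in> K. s k = x}))
         / real (card (r ` {k \<in> K. s k = x})) < \<epsilon>"
    using assms(1) C \<open>\<epsilon> > 0\<close> unfolding almost_finite_def Let_def by blast
  define Kx where "Kx = {k \<in> K. s k = x}"
  define CKx where "CKx = {m c k | c k. c \<in> C \<and> k \<in> Kx \<and> s c = r k}"
  define F where "F = r ` Kx"
  have Kc: "compactin T K" and units: "G0 \<subseteq> K" using K by (auto simp: elementary_subgroupoid_def)
  have "finite F" unfolding F_def Kx_def using finite_source_fibre[OF Kc] by blast
  moreover have "x \<in> F" unfolding F_def Kx_def using x units source_unit range_unit by force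
  moreover have "F \<subseteq> G0"
    unfolding F_def Kx_def using Kc compactin_subset_topspace range_in_units by blast
  moreover have boundary: "real (card (CKx - Kx)) < \<epsilon> * real (card F)"
  proof -
    have "0 < real (card F)" using \<open>x \<in> F\<close> \<open>finite F\<close> card_gt_0_iff by auto
    moreover have "real (card (CKx - Kx)) / real (card F) < \<epsilon>"
      using ratio[OF x] unfolding F_def CKx_def Kx_def .
    ultimately show ?thesis by (subst (asm) pos_divide_less_eq)
  qed
  moreover have "\<bar>real (card (F \<inter> r ` V)) - real (card (F \<inter> s ` V))\<bar> < \<epsilon> * real (card F)"
    if V: "V \<subseteq> C" "i ` V \<subseteq> C" "Gset r s V" for V
  proof -
    have VG: "V \<subseteq> G" using V(1) C compactin_subset_topspace by blast
    have "inj_on r (i ` V)"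
      using V(3) by (auto simp: Gset_def inj_on_def range_inverse[OF subsetD[OF VG]])
    then have "card (F \<inter> r ` V) \<le> card (F \<inter> s ` V) + card (CKx - Kx)"
      using card_source_image_le[OF Kc C V(2)] VG
      by (simp add: range_image_inverse source_image_inverse F_def Kx_def CKx_def)
    moreover have "card (F \<inter> s ` V) \<le> card (F \<inter> r ` V) + card (CKx - Kx)"
      using card_source_image_le[OF Kc C V(1)] V(3) by (simp add: Gset_def F_def Kx_def CKx_def)
    ultimately show ?thesis using boundary by linarith
  qed
  ultimately show ?thesis by blast
qed

section \<open>Compact open bisections\<close>

definition compact_open_bisections :: "'g set set" where
  "compact_open_bisections = {V. openin T V \<and> compactin T V \<and> Gset r s V}"

lemma compact_open_bisections_subset: "V \<in> compact_open_bisections \<Longrightarrow> V \<subseteq> G"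
  by (auto simp: compact_open_bisections_def dest: openin_subset)

lemma inverse_image_compact_open_bisection:
  assumes V: "V \<in> compact_open_bisections" shows "i ` V \<in> compact_open_bisections"
proof -
  have VG: "V \<subseteq> G" using V by (rule compact_open_bisections_subset)
  have "inj_on r (i ` V)" "inj_on s (i ` V)"
    using V by (auto simp: compact_open_bisections_def Gset_def inj_on_def
        range_inverse[OF subsetD[OF VG]] source_inverse[OF subsetD[OF VG]])
  then show ?thesis
    using V openin_inverse_image compactin_inverse_image
    by (auto simp: compact_open_bisections_def Gset_def)
qed

lemma units_clopen: "G0 \<in> clopens T0"
  using closedin_topspace[of T0] openin_topspace[of T0] by (simp add: clopens_def)

lemma range_image_clopen:
  assumes V: "V \<in> compact_open_bisections" shows "r ` V \<in> clopens T0"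
proof -
  have "compactin T0 (r ` V)"
    using V image_compactin[OF _ continuous_map_range] by (auto simp: compact_open_bisections_def)
  then have "closedin T0 (r ` V)"
    using compactin_imp_closedin Hausdorff_space_subtopology[OF Hausdorff] by blast
  then show ?thesis
    using openin_range_image V by (auto simp: clopens_def compact_open_bisections_def)
qed

lemma source_image_clopen: "V \<in> compact_open_bisections \<Longrightarrow> s ` V \<in> clopens T0"
  using range_image_clopen[OF inverse_image_compact_open_bisection] range_image_inverse
    compact_open_bisections_subset by metis

lemma compact_open_bisection_Diff:
  assumes V: "V \<in> compact_open_bisections" and W: "openin T W" "compactin T W"
  shows "V - W \<in> compact_open_bisections"
proof -
  have "closedin T W" using W(2) compactin_imp_closedin Hausdorff by blast
  then have "openin T (V - W)" using V by (auto simp: compact_open_bisections_def)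
  moreover have "closedin T (V - W)"
    using V W(1) compactin_imp_closedin Hausdorff by (auto simp: compact_open_bisections_def)
  then have "compactin T (V - W)"
    using V closed_compactin[OF _ Diff_subset] by (auto simp: compact_open_bisections_def)
  moreover have "Gset r s (V - W)"
    using V by (auto simp: compact_open_bisections_def Gset_def intro: inj_on_subset)
  ultimately show ?thesis by (simp add: compact_open_bisections_def)
qed

end

section \<open>Invariant measures on ample groupoids\<close>

locale ample = etale +
  assumes compact_units: "compactin T G0"
    and totally_disconnected_units: "totally_disconnected_space T0"
    and second_countable: "second_countable T"
begin

lemma compact_space_units: "compact_space T0"
  using compact_units by (simp add: compact_space_subtopology)

lemma countable_clopens_units: "countable (clopens T0)"
  using countable_clopens second_countable_subtopology[OF second_countable] compact_space_units .

lemma clopen_neighbourhood_base_units: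
  "openin T0 W \<Longrightarrow> x \<in> W \<Longrightarrow> \<exists>A \<in> clopens T0. x \<in> A \<and> A \<subseteq> W"
  by (rule clopen_neighbourhood_base[OF compact_space_units
        Hausdorff_space_subtopology[OF Hausdorff] totally_disconnected_units])

lemma Union_clopens_units:
  assumes "openin T0 W" shows "W = \<Union>{A \<in> clopens T0. A \<subseteq> W}"
proof (rule antisym)
  show "W \<subseteq> \<Union>{A \<in> clopens T0. A \<subseteq> W}" using clopen_neighbourhood_base_units[OF assms] by blast
qed blast

lemma countable_compact_open_bisections: "countable compact_open_bisections"
  using countable_compact_openin[OF second_countable]
  by (rule countable_subset[rotated]) (auto simp: compact_open_bisections_def)

lemma compact_open_bisection_base:
  assumes W: "openin T W" and g: "g \<in> W"
  shows "\<exists>V \<in> compact_open_bisections. g \<in> V \<and> V \<subseteq> W"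
proof -
  have "g \<in> G" using W g openin_subset by blast
  then obtain U where U: "openin T U" "g \<in> U"
      "homeomorphic_map (subtopology T U) (subtopology T (r ` U)) r"
    using local_homeomorphism_range by blast
  obtain U' where U': "openin T U'" "g \<in> U'" "inj_on s U'"
    using locally_injective_source \<open>g \<in> G\<close> by blast
  let ?O = "W \<inter> U \<inter> U'"
  have O: "openin T ?O" using W U(1) U'(1) by blast
  obtain A where A: "A \<in> clopens T0" "r g \<in> A" "A \<subseteq> r ` ?O"
    using clopen_neighbourhood_base_units[OF openin_range_image[OF O]] g U(2) U'(2) by blast
  obtain h where h: "homeomorphic_maps (subtopology T U) (subtopology T (r ` U)) r h"
    using U(3) homeomorphic_map_maps by blast
  have UG: "U \<subseteq> G" using U(1) openin_subset by blast
  have hc: "continuous_map (subtopology T (r ` U)) (subtopology T U) h"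
    and hr: "\<And>y. y \<in> U \<Longrightarrow> h (r y) = y"
    using h UG unfolding homeomorphic_maps_def by auto
  let ?V = "{y \<in> ?O. r y \<in> A}"
  have "?V = h ` A"
  proof
    show "?V \<subseteq> h ` A" using hr by (auto intro!: image_eqI)
    show "h ` A \<subseteq> ?V" using A(3) hr by auto
  qed
  moreover have "compactin (subtopology T (r ` U)) A"
  proof -
    have "compactin T0 A" using A(1) compact_space_units closedin_compact_space
      by (auto simp: clopens_def)
    then show ?thesis using A(3) by (auto simp: compactin_subtopology)
  qed
  ultimately have "compactin (subtopology T U) ?V" using hc image_compactin by metis
  then have "compactin T ?V" by (simp add: compactin_subtopology)
  moreover have "openin T ?V"
  proof -
    have "openin T {y \<in> G. r y \<in> A}"
      using openin_continuous_map_preimage[OF continuous_map_range] A(1) by (simp add: clopens_def)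
    moreover have "?V = ?O \<inter> {y \<in> G. r y \<in> A}" using O openin_subset by blast
    ultimately show ?thesis using O by (simp add: openin_Int)
  qed
  moreover have "Gset r s ?V"
  proof -
    have "inj_on r U"
      using U(3) UG homeomorphic_map_def by (metis topspace_subtopology_subset)
    then show ?thesis using U'(3) by (auto simp: Gset_def intro: inj_on_subset)
  qed
  moreover have "g \<in> ?V" using g U(2) U'(2) A(2) by blast
  ultimately show ?thesis by (auto simp: compact_open_bisections_def)
qed

lemma open_eq_disjoint_Union_compact_open_bisections:
  assumes U: "openin T U"
  obtains D where "disjoint_family D" "range D \<subseteq> compact_open_bisections" "U = (\<Union>n::nat. D n)"
proof -
  let ?Q = "insert {} {V \<in> compact_open_bisections. V \<subseteq> U}"
  have "countable ?Q" using countable_compact_open_bisections by (simp add: countable_subset)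
  then have rW: "range (from_nat_into ?Q) = ?Q" by (simp add: range_from_nat_into)
  define W where "W = from_nat_into ?Q"
  have empty: "{} \<in> compact_open_bisections" by (simp add: compact_open_bisections_def Gset_def)
  have W: "W n \<in> compact_open_bisections" for n
    using rW empty unfolding W_def by (metis (mono_tags, lifting) insertE mem_Collect_eq rangeI)
  \<comment> \<open>Each term of \<open>disjointed W\<close> removes a finite, hence compact open, union of earlier terms.\<close>
  have "disjointed W n \<in> compact_open_bisections" for n
  proof -
    have "openin T (W k)" "compactin T (W k)" for k
      using W[of k] by (auto simp: compact_open_bisections_def)
    then have "openin T (\<Union>(W ` {..<n}))" "compactin T (\<Union>(W ` {..<n}))"
      by (auto intro!: openin_Union compactin_Union)
    then show ?thesis
      using compact_open_bisection_Diff[OF W] by (simp add: disjointed_def atLeast0LessThan)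
  qed
  then have "range (disjointed W) \<subseteq> compact_open_bisections" by auto
  moreover have "U = (\<Union>n. disjointed W n)"
  proof -
    have "(\<Union>n. disjointed W n) = \<Union>?Q" by (simp add: UN_disjointed_eq W_def rW)
    also have "\<dots> = U"
      using compact_open_bisection_base[OF U] by (auto simp: compact_open_bisections_def)
    finally show ?thesis by simp
  qed
  ultimately show ?thesis by (rule that[OF disjoint_family_disjointed])
qed

lemma emeasure_range_image_eq_source_image:
  assumes sets: "sets \<mu> = sigma_sets G0 (clopens T0)"
    and inv: "\<And>V. V \<in> compact_open_bisections \<Longrightarrow> emeasure \<mu> (r ` V) = emeasure \<mu> (s ` V)"
    and U: "openin T U" "Gset r s U"
  shows "emeasure \<mu> (r ` U) = emeasure \<mu> (s ` U)"
proof -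
  obtain D where D: "disjoint_family D" "range D \<subseteq> compact_open_bisections" "U = (\<Union>n::nat. D n)"
    by (rule open_eq_disjoint_Union_compact_open_bisections[OF U(1)])
  have disjoint: "disjoint_family (\<lambda>n. f ` D n)" if inj: "inj_on f U" for f
    unfolding disjoint_family_on_def
  proof (intro ballI impI)
    fix a b :: nat assume "a \<noteq> b"
    then have "D a \<inter> D b = {}" using D(1) by (simp add: disjoint_family_on_def)
    moreover have "D a \<subseteq> U" "D b \<subseteq> U" using D(3) by auto
    ultimately show "f ` D a \<inter> f ` D b = {}" by (simp add: inj_on_image_Int[OF inj, symmetric])
  qed
  have measurable: "range (\<lambda>n. f ` D n) \<subseteq> sets \<mu>"
    if "\<And>V. V \<in> compact_open_bisections \<Longrightarrow> f ` V \<in> clopens T0" for f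
    using D(2) that by (auto simp: sets intro: sigma_sets.Basic)
  have "emeasure \<mu> (r ` U) = (\<Sum>n. emeasure \<mu> (r ` D n))"
    using suminf_emeasure[OF measurable[OF range_image_clopen] disjoint] U(2)
    by (simp add: D(3) image_UN Gset_def)
  also have "\<dots> = (\<Sum>n. emeasure \<mu> (s ` D n))"
    using inv D(2) by (simp add: image_subset_iff)
  also have "\<dots> = emeasure \<mu> (s ` U)"
    using suminf_emeasure[OF measurable[OF source_image_clopen] disjoint] U(2)
    by (simp add: D(3) image_UN Gset_def)
  finally show ?thesis .
qed

lemma invariant_measure_of_invariant_content:
  assumes nonneg: "\<And>A. A \<in> clopens T0 \<Longrightarrow> L A \<ge> (0::real)"
    and add: "\<And>A B. A \<in> clopens T0 \<Longrightarrow> B \<in> clopens T0 \<Longrightarrow> A \<inter> B = {} \<Longrightarrow> L (A \<union> B) = L A + L B"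
    and total: "L G0 = 1"
    and inv: "\<And>V. V \<in> compact_open_bisections \<Longrightarrow> L (r ` V) = L (s ` V)"
  shows "invariant_measures T G0 r s \<noteq> {}"
proof -
  obtain \<mu> where \<mu>: "space \<mu> = topspace T0" "sets \<mu> = sigma_sets (topspace T0) (clopens T0)"
      "\<forall>A \<in> clopens T0. emeasure \<mu> A = ennreal (L A)"
    using clopen_content_extends_to_measure[OF compact_space_units nonneg add] by blast
  have "sigma_sets (topspace T0) (clopens T0) = sigma_sets (topspace T0) {U. openin T0 U}"
    by (rule sigma_sets_countable_base[OF countable_clopens_units _ Union_clopens_units])
      (simp add: clopens_def)
  moreover have "prob_space \<mu>"
  proof
    show "emeasure \<mu> (space \<mu>) = 1" using \<mu>(1,3) units_clopen by (simp add: total)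
  qed
  moreover have "emeasure \<mu> (r ` U) = emeasure \<mu> (s ` U)" if "openin T U" "Gset r s U" for U
  proof (rule emeasure_range_image_eq_source_image[OF _ _ that])
    show "sets \<mu> = sigma_sets G0 (clopens T0)" using \<mu>(2) by simp
    fix V assume "V \<in> compact_open_bisections"
    then show "emeasure \<mu> (r ` V) = emeasure \<mu> (s ` V)"
      using \<mu>(3) range_image_clopen source_image_clopen inv by simp
  qed
  ultimately have "\<mu> \<in> invariant_measures T G0 r s"
    using \<mu>(1,2) by (simp add: invariant_measures_def)
  then show ?thesis by blast
qed

lemma exhausting_compact_sets:
  obtains C where "\<forall>n::nat. compactin T (C n)"
    "\<forall>V \<in> compact_open_bisections. \<exists>j. \<forall>n\<ge>j. V \<subseteq> C n \<and> i ` V \<subseteq> C n"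
proof -
  define e where "e = from_nat_into compact_open_bisections"
  define C where "C n = (\<Union>j\<le>n. e j \<union> i ` e j)" for n
  have "{} \<in> compact_open_bisections" by (simp add: compact_open_bisections_def Gset_def)
  then have e: "e j \<in> compact_open_bisections" for j
    unfolding e_def by (intro from_nat_into) blast
  have "compactin T (C n)" for n
    unfolding C_def using e inverse_image_compact_open_bisection
    by (intro compactin_Union) (auto simp: compact_open_bisections_def intro!: compactin_Un)
  moreover have "\<exists>j. \<forall>n\<ge>j. V \<subseteq> C n \<and> i ` V \<subseteq> C n" if V: "V \<in> compact_open_bisections" for V
  proof -
    define j where "j = to_nat_on compact_open_bisections V"
    have "e j = V"
      unfolding e_def j_def using countable_compact_open_bisections V by (rule from_nat_into_to_nat_on)
    then have "V \<subseteq> C n \<and> i ` V \<subseteq> C n" if "j \<le> n" for n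
      using that unfolding C_def by blast
    then show ?thesis by blast
  qed
  ultimately show ?thesis by (intro that[of C]) auto
qed

lemma almost_invariant_sequence:
  assumes af: "almost_finite T G0 r s m i" and x0: "x0 \<in> G0"
  obtains F where "\<forall>n::nat. finite (F n) \<and> x0 \<in> F n \<and> F n \<subseteq> G0"
    "\<forall>V \<in> compact_open_bisections.
       (\<lambda>n. counting_density (F n) (r ` V) - counting_density (F n) (s ` V)) \<longlonglongrightarrow> 0"
proof -
  obtain C where "\<forall>n::nat. compactin T (C n)"
    and exhaust: "\<forall>V \<in> compact_open_bisections. \<exists>j. \<forall>n\<ge>j. V \<subseteq> C n \<and> i ` V \<subseteq> C n"
    by (rule exhausting_compact_sets)
  then have C: "compactin T (C n)" for n by blast
  have "\<forall>n. \<exists>F. finite F \<and> x0 \<in> F \<and> F \<subseteq> G0 \<and>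
      (\<forall>V. V \<subseteq> C n \<longrightarrow> i ` V \<subseteq> C n \<longrightarrow> Gset r s V \<longrightarrow>
        \<bar>real (card (F \<inter> r ` V)) - real (card (F \<inter> s ` V))\<bar> < 1 / (real n + 1) * real (card F))"
    by (intro allI almost_finite_imp_almost_invariant_set[OF af x0 C]) simp
  then obtain F where "\<forall>n. finite (F n) \<and> x0 \<in> F n \<and> F n \<subseteq> G0 \<and>
      (\<forall>V. V \<subseteq> C n \<longrightarrow> i ` V \<subseteq> C n \<longrightarrow> Gset r s V \<longrightarrow>
        \<bar>real (card (F n \<inter> r ` V)) - real (card (F n \<inter> s ` V))\<bar>
          < 1 / (real n + 1) * real (card (F n)))"
    by (rule choice[THEN exE])
  then have F: "\<And>n. finite (F n)" "\<And>n. x0 \<in> F n" "\<And>n. F n \<subseteq> G0"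
    and F_invariant: "\<And>n V. V \<subseteq> C n \<Longrightarrow> i ` V \<subseteq> C n \<Longrightarrow> Gset r s V \<Longrightarrow>
       \<bar>real (card (F n \<inter> r ` V)) - real (card (F n \<inter> s ` V))\<bar> < 1 / (real n + 1) * real (card (F n))"
    by blast+
  have F_limit: "(\<lambda>n. counting_density (F n) (r ` V) - counting_density (F n) (s ` V)) \<longlonglongrightarrow> 0"
    if V: "V \<in> compact_open_bisections" for V
  proof -
    obtain j where j: "\<forall>n\<ge>j. V \<subseteq> C n \<and> i ` V \<subseteq> C n" using exhaust V by blast
    have "\<forall>\<^sub>F n in sequentially.
        norm (counting_density (F n) (r ` V) - counting_density (F n) (s ` V)) \<le> 1 / (real n + 1)"
    proof (rule eventually_sequentiallyI[of j])
      fix n assume "j \<le> n"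
      then have bound: "\<bar>real (card (F n \<inter> r ` V)) - real (card (F n \<inter> s ` V))\<bar>
          < 1 / (real n + 1) * real (card (F n))"
        using F_invariant j V by (simp add: compact_open_bisections_def)
      have "\<bar>counting_density (F n) (r ` V) - counting_density (F n) (s ` V)\<bar> < 1 / (real n + 1)"
        by (rule counting_density_diff_less[OF F(1) _ bound]) (use F(2) in blast)
      then show "norm (counting_density (F n) (r ` V) - counting_density (F n) (s ` V)) \<le> 1 / (real n + 1)"
        by simp
    qed
    moreover have "(\<lambda>n. 1 / (real n + 1)) \<longlonglongrightarrow> 0"
      using LIMSEQ_inverse_real_of_nat by (simp add: inverse_eq_divide add.commute)
    ultimately show ?thesis by (rule Lim_null_comparison)
  qed
  show ?thesis by (intro that[of F]) (simp_all add: F F_limit)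
qed

lemma almost_finite_imp_invariant_content:
  assumes af: "almost_finite T G0 r s m i" and "G0 \<noteq> {}"
  obtains L where "\<And>A. A \<in> clopens T0 \<Longrightarrow> L A \<ge> (0::real)"
    "\<And>A B. A \<in> clopens T0 \<Longrightarrow> B \<in> clopens T0 \<Longrightarrow> A \<inter> B = {} \<Longrightarrow> L (A \<union> B) = L A + L B"
    "L G0 = 1"
    "\<And>V. V \<in> compact_open_bisections \<Longrightarrow> L (r ` V) = L (s ` V)"
proof -
  obtain x0 where x0: "x0 \<in> G0" using \<open>G0 \<noteq> {}\<close> by blast
  obtain F where F: "\<forall>n::nat. finite (F n) \<and> x0 \<in> F n \<and> F n \<subseteq> G0"
    and F_invariant: "\<forall>V \<in> compact_open_bisections.
       (\<lambda>n. counting_density (F n) (r ` V) - counting_density (F n) (s ` V)) \<longlonglongrightarrow> 0"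
    by (rule almost_invariant_sequence[OF af x0])
  have F: "finite (F n)" "x0 \<in> F n" "F n \<subseteq> G0" for n using F by blast+
  have "\<exists>\<sigma> L. strict_mono \<sigma> \<and> (\<forall>A \<in> clopens T0. (\<lambda>n. counting_density (F (\<sigma> n)) A) \<longlonglongrightarrow> L A)"
    by (rule subseq_converging_on_countable[OF countable_clopens_units _ compact_Icc[of 0 1]])
      (rule counting_density_bounds[OF F(1)])
  then obtain \<sigma> L where \<sigma>: "strict_mono \<sigma>"
    and lim: "\<And>A. A \<in> clopens T0 \<Longrightarrow> (\<lambda>n. counting_density (F (\<sigma> n)) A) \<longlonglongrightarrow> L A"
    by blast
  have fin: "finite (F (\<sigma> n))" for n by (rule F(1))
  show ?thesis
  proof (rule that)
    show "L A \<ge> 0" if "A \<in> clopens T0" for A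
      by (rule limit_counting_density_nonneg[OF fin lim that])
    show "L (A \<union> B) = L A + L B" if "A \<in> clopens T0" "B \<in> clopens T0" "A \<inter> B = {}" for A B
      by (rule limit_counting_density_Un[OF fin lim that(1,2) clopens_Un[OF that(1,2)] that(3)])
    show "L G0 = 1"
      by (rule limit_counting_density_total[OF fin lim units_clopen]) (use F(2,3) in auto)
    fix V assume V: "V \<in> compact_open_bisections"
    have "(\<lambda>n. counting_density (F (\<sigma> n)) (r ` V) - counting_density (F (\<sigma> n)) (s ` V)) \<longlonglongrightarrow> 0"
      using LIMSEQ_subseq_LIMSEQ[OF F_invariant[rule_format, OF V] \<sigma>] by (simp add: o_def)
    moreover have "(\<lambda>n. counting_density (F (\<sigma> n)) (r ` V) - counting_density (F (\<sigma> n)) (s ` V))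
        \<longlonglongrightarrow> L (r ` V) - L (s ` V)"
      using V by (intro tendsto_diff lim range_image_clopen source_image_clopen)
    ultimately have "L (r ` V) - L (s ` V) = 0" by (rule LIMSEQ_unique[rotated])
    then show "L (r ` V) = L (s ` V)" by simp
  qed
qed

end

theorem lemma6p5:
  fixes T :: "'g topology" and G0 :: "'g set"
    and r s :: "'g \<Rightarrow> 'g" and m :: "'g \<Rightarrow> 'g \<Rightarrow> 'g" and i :: "'g \<Rightarrow> 'g"
  assumes "etale_groupoid T G0 r s m i"
    and "second_countable T"
    and "G0 \<noteq> {}"
    and "compactin T G0"
    and "totally_disconnected_space (subtopology T G0)"
    and "almost_finite T G0 r s m i"
  shows "invariant_measures T G0 r s \<noteq> {}"
proof -
  interpret ample T G0 r s m i
    by unfold_locales (fact assms)+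
  show ?thesis
    by (rule almost_finite_imp_invariant_content[OF assms(6,3)])
      (rule invariant_measure_of_invariant_content)
qed

end
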